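(* For every rule $\mathcal{R}$ and every starting vertex, the greedy random walk on the complete graph $K_n=(V,E)$ satisfies \[ \mathbb{E}[C_E(K_n)] \le |E| + (1+o(1))\, n\log n, \] where $o(1)\to0$ as $n\to\infty$ uniformly in the rule and the starting vertex. (Indeed, the overhead is at most $\sum_{i=1}^{n-1}\frac{n-1}{n-i}$.)
   Context: A greedy random walk (GRW) on a connected locally finite graph $G=(V,E)$ with rule $\mathcal{R}$ started at $v_0$: $X_0=v_0$; with $H_t=\{\{X_{s-1},X_s\}:0<s\le t\}$ (edges traversed up to time $t$) and $J_t(v)=\{e\in E: v\in e, e\notin H_t\}$, if $J_t(X_t)\ne\emptyset$ then $X_{t+1}=w$ for some $w$ with $\{X_t,w\}\in J_t(X_t)$, chosen according to an arbitrary (possibly randomized, history-dependent) rule $\mathcal{R}$; if $J_t(X_t)=\emptyset$ then $X_{t+1}$ is a uniformly random neighbor of $X_t$. For finite $G$, the edge cover time is $C_E(G)=\min\{t:H_t=E\}$. $\log$ is the natural logarithm. *)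

theory Defs
  imports "HOL-Probability.Probability"
begin

text \<open>A (finite, simple) graph is given by its edge set E, a set of 2-element sets.
  A trajectory is the list [X_0, X_1, ..., X_t] in chronological order.\<close>

definition traversed :: "'a list \<Rightarrow> 'a set set" where
  "traversed xs = {{xs ! i, xs ! Suc i} | i. Suc i < length xs}"

definition unused_edges :: "'a set set \<Rightarrow> 'a list \<Rightarrow> 'a \<Rightarrow> 'a set set" where
  "unused_edges E xs v = {e \<in> E. v \<in> e \<and> e \<notin> traversed xs}"

definition nbrs :: "'a set set \<Rightarrow> 'a \<Rightarrow> 'a set" where
  "nbrs E v = {w. {v, w} \<in> E}"

definition valid_rule :: "'a set set \<Rightarrow> ('a list \<Rightarrow> 'a pmf) \<Rightarrow> bool" where
  "valid_rule E R \<longleftrightarrow> (\<forall>xs. unused_edges E xs (last xs) \<noteq> {} \<longrightarrow>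
      set_pmf (R xs) \<subseteq> {w. {last xs, w} \<in> unused_edges E xs (last xs)})"

definition grw_step :: "'a set set \<Rightarrow> ('a list \<Rightarrow> 'a pmf) \<Rightarrow> 'a list \<Rightarrow> 'a list pmf" where
  "grw_step E R xs =
     map_pmf (\<lambda>w. xs @ [w])
       (if unused_edges E xs (last xs) \<noteq> {} then R xs else pmf_of_set (nbrs E (last xs)))"

primrec grw :: "'a set set \<Rightarrow> ('a list \<Rightarrow> 'a pmf) \<Rightarrow> 'a \<Rightarrow> nat \<Rightarrow> 'a list pmf" where
  "grw E R v0 0 = return_pmf [v0]"
| "grw E R v0 (Suc t) = bind_pmf (grw E R v0 t) (grw_step E R)"

text \<open>Expected edge cover time, via E[C] = sum_{t>=0} P(C > t) = sum_t P(H_t does not cover E).\<close>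
definition expected_edge_cover_time :: "'a set set \<Rightarrow> ('a list \<Rightarrow> 'a pmf) \<Rightarrow> 'a \<Rightarrow> ennreal" where
  "expected_edge_cover_time E R v0 =
     (\<Sum>t. ennreal (measure_pmf.prob (grw E R v0 t) {xs. \<not> E \<subseteq> traversed xs}))"

definition Kn_edges :: "nat \<Rightarrow> nat set set" where
  "Kn_edges n = {{u, v} | u v. u < n \<and> v < n \<and> u \<noteq> v}"

end

theory Submission
  imports Defs
begin

text \<open>
  Call a vertex of \<open>K\<^sub>n\<close> saturated once all its edges have been traversed. From an
  unsaturated vertex the greedy walk traverses a new edge. From a saturated vertex it moves
  uniformly, and while \<open>k\<close> vertices are saturated it reaches an unsaturated one with
  probability \<open>(n - k)/(n - 1)\<close>, so it waits \<open>(n - 1)/(n - k)\<close> steps in expectation.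
  The number of untraversed edges plus the waiting times still ahead is therefore a potential
  whose expectation drops by at least one per step until the edges are covered; summing this
  drift bounds the expected cover time by the initial potential
  \<open>|E| + (n - 1) H\<^sub>n\<^sub>-\<^sub>1 \<le> |E| + n log n + n\<close>.
\<close>

lemma traversed_snoc:
  assumes "xs \<noteq> []"
  shows "traversed (xs @ [w]) = insert {last xs, w} (traversed xs)"
proof -
  let ?ys = "xs @ [w]"
  have old: "{?ys ! i, ?ys ! Suc i} = {xs ! i, xs ! Suc i}" if "Suc i < length xs" for i
    using that by (simp add: nth_append)
  have new: "{?ys ! (length xs - 1), ?ys ! Suc (length xs - 1)} = {last xs, w}"
    using assms by (simp add: nth_append last_conv_nth)
  have idx: "Suc i < length ?ys \<longleftrightarrow> Suc i < length xs \<or> i = length xs - 1" for i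
    using assms by (cases xs) auto
  show ?thesis
  proof (rule set_eqI, rule iffI)
    fix e assume "e \<in> traversed ?ys"
    then show "e \<in> insert {last xs, w} (traversed xs)"
      using old new idx unfolding traversed_def by blast
  next
    fix e assume "e \<in> insert {last xs, w} (traversed xs)"
    then show "e \<in> traversed ?ys"
      using old new idx unfolding traversed_def by blast
  qed
qed

lemma set_pmf_grw_step:
  assumes "valid_rule E R" "finite (nbrs E (last xs))" "nbrs E (last xs) \<noteq> {}"
    and "ys \<in> set_pmf (grw_step E R xs)"
  obtains w where "ys = xs @ [w]" "{last xs, w} \<in> E"
    "unused_edges E xs (last xs) \<noteq> {} \<Longrightarrow> {last xs, w} \<notin> traversed xs"
proof (cases "unused_edges E xs (last xs) = {}")
  case True
  with assms(2-4) show ?thesis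
    using that unfolding grw_step_def nbrs_def by auto
next
  case False
  with assms(1,4) show ?thesis
    using that unfolding grw_step_def valid_rule_def unused_edges_def by auto
qed

lemma expected_edge_cover_time_le_potential:
  fixes \<Phi> :: "'a list \<Rightarrow> ennreal"
  assumes drift: "\<And>t xs. xs \<in> set_pmf (grw E R v0 t) \<Longrightarrow>
      indicator {xs. \<not> E \<subseteq> traversed xs} xs + (\<integral>\<^sup>+ys. \<Phi> ys \<partial>grw_step E R xs) \<le> \<Phi> xs"
  shows "expected_edge_cover_time E R v0 \<le> \<Phi> [v0]"
proof -
  let ?A = "{xs. \<not> E \<subseteq> traversed xs}"
  let ?p = "\<lambda>t. ennreal (measure_pmf.prob (grw E R v0 t) ?A)"
  have partial: "(\<Sum>t<T. ?p t) + (\<integral>\<^sup>+xs. \<Phi> xs \<partial>grw E R v0 T) \<le> \<Phi> [v0]" for T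
  proof (induction T)
    case (Suc T)
    have "?p T + (\<integral>\<^sup>+xs. \<Phi> xs \<partial>grw E R v0 (Suc T))
        = (\<integral>\<^sup>+xs. indicator ?A xs + (\<integral>\<^sup>+ys. \<Phi> ys \<partial>grw_step E R xs) \<partial>grw E R v0 T)"
      by (simp add: nn_integral_add measure_pmf.emeasure_eq_measure[symmetric])
    also have "\<dots> \<le> (\<integral>\<^sup>+xs. \<Phi> xs \<partial>grw E R v0 T)"
      by (intro nn_integral_mono_AE AE_pmfI drift)
    finally have "(\<Sum>t<Suc T. ?p t) + (\<integral>\<^sup>+xs. \<Phi> xs \<partial>grw E R v0 (Suc T))
        \<le> (\<Sum>t<T. ?p t) + (\<integral>\<^sup>+xs. \<Phi> xs \<partial>grw E R v0 T)"
      by (simp add: add.assoc add_left_mono)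
    then show ?case using Suc.IH by (rule order_trans)
  qed simp
  show ?thesis
    unfolding expected_edge_cover_time_def suminf_eq_SUP
  proof (rule SUP_least)
    show "(\<Sum>t<T. ?p t) \<le> \<Phi> [v0]" for T
      using partial[of T] by (rule order_trans[rotated]) simp
  qed
qed

lemma doubleton_mem_Kn_edges: "{u, v} \<in> Kn_edges n \<longleftrightarrow> u < n \<and> v < n \<and> u \<noteq> v"
  unfolding Kn_edges_def by (auto simp: doubleton_eq_iff)

lemma Kn_edgesE:
  assumes "e \<in> Kn_edges n"
  obtains u v where "e = {u, v}" "u < n" "v < n" "u \<noteq> v"
  using assms unfolding Kn_edges_def by auto

lemma finite_Kn_edges: "finite (Kn_edges n)"
  by (rule finite_subset[of _ "Pow {..<n}"]) (auto elim: Kn_edgesE)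

lemma nbrs_Kn_edges: "v < n \<Longrightarrow> nbrs (Kn_edges n) v = {..<n} - {v}"
  unfolding nbrs_def by (auto simp: doubleton_mem_Kn_edges)

definition saturated :: "nat \<Rightarrow> nat set set \<Rightarrow> nat \<Rightarrow> bool" where
  "saturated n T v \<longleftrightarrow> (\<forall>w<n. w \<noteq> v \<longrightarrow> {v, w} \<in> T)"

definition saturated_vertices :: "nat \<Rightarrow> nat set set \<Rightarrow> nat set" where
  "saturated_vertices n T = {v. v < n \<and> saturated n T v}"

lemma finite_saturated_vertices: "finite (saturated_vertices n T)"
  unfolding saturated_vertices_def by auto

lemma saturated_vertices_mono: "T \<subseteq> T' \<Longrightarrow> saturated_vertices n T \<subseteq> saturated_vertices n T'"
  unfolding saturated_vertices_def saturated_def by auto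

lemma unused_edges_Kn_edges_eq_empty_iff:
  assumes "v < n"
  shows "unused_edges (Kn_edges n) xs v = {} \<longleftrightarrow> saturated n (traversed xs) v"
proof
  assume "unused_edges (Kn_edges n) xs v = {}"
  then show "saturated n (traversed xs) v"
    using assms unfolding unused_edges_def saturated_def by (auto simp: doubleton_mem_Kn_edges)
next
  assume sat: "saturated n (traversed xs) v"
  show "unused_edges (Kn_edges n) xs v = {}"
  proof (rule equals0I)
    fix e assume e: "e \<in> unused_edges (Kn_edges n) xs v"
    then obtain w where "e = {v, w}" "w < n" "w \<noteq> v"
      unfolding unused_edges_def by (auto elim!: Kn_edgesE)
    with sat e show False
      unfolding unused_edges_def saturated_def by auto
  qed
qed

lemma Kn_edges_subset_iff_saturated: "Kn_edges n \<subseteq> T \<longleftrightarrow> (\<forall>v<n. saturated n T v)"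
proof
  assume "Kn_edges n \<subseteq> T"
  then show "\<forall>v<n. saturated n T v"
    unfolding saturated_def by (auto simp: doubleton_mem_Kn_edges)
next
  assume "\<forall>v<n. saturated n T v"
  then show "Kn_edges n \<subseteq> T"
    unfolding saturated_def by (auto elim!: Kn_edgesE)
qed

lemma card_saturated_vertices_less:
  assumes "\<not> Kn_edges n \<subseteq> T"
  shows "card (saturated_vertices n T) < n"
proof -
  obtain v where "v < n" "\<not> saturated n T v"
    using assms Kn_edges_subset_iff_saturated by blast
  then have "saturated_vertices n T \<subset> {..<n}"
    unfolding saturated_vertices_def by auto
  then show ?thesis
    by (metis card_lessThan finite_lessThan psubset_card_mono)
qed

definition escape_time :: "nat \<Rightarrow> nat \<Rightarrow> real" where
  "escape_time n k = real (n - 1) / real (n - k)"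

text \<open>The waiting time at level \<open>card (saturated_vertices n T)\<close> is owed only while the walk
  sits at a saturated vertex; inserting \<open>v\<close> drops it otherwise.\<close>
definition cover_potential :: "nat \<Rightarrow> nat set set \<Rightarrow> nat \<Rightarrow> real" where
  "cover_potential n T v = real (card (Kn_edges n - T)) +
     (\<Sum>k = card (insert v (saturated_vertices n T))..n - 1. escape_time n k)"

lemma escape_time_nonneg: "0 \<le> escape_time n k"
  unfolding escape_time_def by simp

lemma sum_escape_time_antimono:
  "a \<le> b \<Longrightarrow> (\<Sum>k = b..m. escape_time n k) \<le> (\<Sum>k = a..m. escape_time n k)"
  by (rule sum_mono2) (auto simp: escape_time_nonneg)

lemma cover_potential_nonneg: "0 \<le> cover_potential n T v"
  unfolding cover_potential_def by (simp add: sum_nonneg escape_time_nonneg)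

lemma cover_potential_covered:
  assumes "Kn_edges n \<subseteq> T" "v < n"
  shows "cover_potential n T v = 0"
proof -
  have "insert v (saturated_vertices n T) = {..<n}"
    using assms unfolding Kn_edges_subset_iff_saturated saturated_vertices_def by auto
  then show ?thesis
    using assms unfolding cover_potential_def by (simp add: Diff_eq_empty_iff[THEN iffD2])
qed

lemma cover_potential_greedy_step:
  assumes "v < n" "w < n" "w \<noteq> v" "{v, w} \<notin> T" "\<not> saturated n T v"
  shows "1 + cover_potential n (insert {v, w} T) w \<le> cover_potential n T v"
proof -
  let ?S = "saturated_vertices n T" and ?S' = "saturated_vertices n (insert {v, w} T)"
  have vw: "{v, w} \<in> Kn_edges n - T"
    using assms by (simp add: doubleton_mem_Kn_edges)
  have card_edges: "card (Kn_edges n - insert {v, w} T) = card (Kn_edges n - T) - 1"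
  proof -
    have "Kn_edges n - insert {v, w} T = (Kn_edges n - T) - {{v, w}}"
      by auto
    then show ?thesis
      using vw finite_Kn_edges by (simp add: card_Diff_singleton)
  qed
  have "card (Kn_edges n - T) \<noteq> 0"
    using vw finite_Kn_edges by (auto simp: card_eq_0_iff)
  then have edges: "1 + real (card (Kn_edges n - insert {v, w} T)) = real (card (Kn_edges n - T))"
    unfolding card_edges by (simp add: of_nat_diff)
  have "v \<notin> ?S" "w \<notin> ?S"
    using assms unfolding saturated_vertices_def saturated_def by (auto simp: insert_commute)
  then have "card (insert v ?S) = card (insert w ?S)"
    by (simp add: finite_saturated_vertices)
  also have "\<dots> \<le> card (insert w ?S')"
    using saturated_vertices_mono[of T "insert {v, w} T" n]
    by (intro card_mono) (auto simp: finite_saturated_vertices)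
  finally have "(\<Sum>k = card (insert w ?S')..n - 1. escape_time n k)
      \<le> (\<Sum>k = card (insert v ?S)..n - 1. escape_time n k)"
    by (rule sum_escape_time_antimono)
  with edges show ?thesis
    unfolding cover_potential_def by linarith
qed

lemma cover_potential_uniform_step:
  assumes "v < n" "saturated n T v" "\<not> Kn_edges n \<subseteq> T"
  shows "1 + (\<Sum>w \<in> {..<n} - {v}. cover_potential n T w) / real (n - 1) = cover_potential n T v"
proof -
  let ?S = "saturated_vertices n T"
  let ?U = "real (card (Kn_edges n - T))"
  define k where "k = card ?S"
  define B where "B = (\<Sum>i = Suc k..n - 1. escape_time n i)"
  have "v \<in> ?S"
    using assms unfolding saturated_vertices_def by simp
  then have k: "1 \<le> k" "card (?S - {v}) = k - 1"
    unfolding k_def using finite_saturated_vertices by (auto simp: Suc_le_eq card_gt_0_iff)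
  have "k < n"
    unfolding k_def using card_saturated_vertices_less[OF assms(3)] .
  have escape: "1 + real (k - 1) * escape_time n k / real (n - 1) = escape_time n k"
  proof -
    define a b where "a = real (n - 1)" and "b = real (n - k)"
    have "real (k - 1) = a - b" "0 < a" "0 < b"
      using k \<open>k < n\<close> by (simp_all add: a_def b_def of_nat_diff)
    then show ?thesis
      unfolding escape_time_def a_def[symmetric] b_def[symmetric] by (simp add: field_simps)
  qed
  have potential: "cover_potential n T w = ?U + B + (if w \<in> ?S then escape_time n k else 0)"
    for w
    using \<open>k < n\<close> \<open>v \<in> ?S\<close> unfolding cover_potential_def B_def k_def
    by (simp add: insert_absorb finite_saturated_vertices sum.atLeast_Suc_atMost)
  have "({..<n} - {v}) \<inter> ?S = ?S - {v}"
    unfolding saturated_vertices_def by auto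
  then have "(\<Sum>w \<in> {..<n} - {v}. cover_potential n T w)
      = real (n - 1) * (?U + B) + real (k - 1) * escape_time n k"
    unfolding potential using assms(1) k
    by (simp add: sum.distrib sum.If_cases of_nat_diff)
  moreover have "0 < real (n - 1)"
    using \<open>k < n\<close> k by simp
  ultimately show ?thesis
    using escape potential[of v] \<open>v \<in> ?S\<close> by (simp add: field_simps)
qed

lemma lessThan_diff_singleton_nonempty: "2 \<le> (n :: nat) \<Longrightarrow> {..<n} - {v} \<noteq> {}"
proof -
  assume "2 \<le> n"
  then have "(if v = 0 then 1 else 0) \<in> {..<n} - {v}"
    by auto
  then show ?thesis by blast
qed

definition trajectory_potential :: "nat \<Rightarrow> nat list \<Rightarrow> real" where
  "trajectory_potential n xs = cover_potential n (traversed xs) (last xs)"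

lemma grw_step_Kn_edges_successor:
  assumes "2 \<le> n" "valid_rule (Kn_edges n) R" "xs \<noteq> []" "last xs < n"
    and "ys \<in> set_pmf (grw_step (Kn_edges n) R xs)"
  obtains w where "ys = xs @ [w]" "w < n" "w \<noteq> last xs"
    "\<not> saturated n (traversed xs) (last xs) \<Longrightarrow> {last xs, w} \<notin> traversed xs"
proof -
  have "finite (nbrs (Kn_edges n) (last xs))" "nbrs (Kn_edges n) (last xs) \<noteq> {}"
    using assms(1,4) lessThan_diff_singleton_nonempty by (auto simp: nbrs_Kn_edges)
  then show ?thesis
    using set_pmf_grw_step[OF assms(2) _ _ assms(5)] that assms(4)
    by (metis doubleton_mem_Kn_edges unused_edges_Kn_edges_eq_empty_iff)
qed

lemma set_pmf_grw_Kn_edges_last_less: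
  assumes "2 \<le> n" "v0 < n" "valid_rule (Kn_edges n) R"
  shows "xs \<in> set_pmf (grw (Kn_edges n) R v0 t) \<Longrightarrow> xs \<noteq> [] \<and> last xs < n"
proof (induction t arbitrary: xs)
  case 0
  then show ?case using assms(2) by simp
next
  case (Suc t)
  then obtain ys where "ys \<in> set_pmf (grw (Kn_edges n) R v0 t)"
    and "xs \<in> set_pmf (grw_step (Kn_edges n) R ys)"
    by auto
  with Suc.IH show ?case
    by (metis assms(1,3) grw_step_Kn_edges_successor last_snoc snoc_eq_iff_butlast)
qed

lemma nn_integral_grw_step_Kn_edges_covered:
  assumes "2 \<le> n" "valid_rule (Kn_edges n) R" "xs \<noteq> []" "last xs < n"
    and "Kn_edges n \<subseteq> traversed xs"
  shows "(\<integral>\<^sup>+ys. ennreal (trajectory_potential n ys) \<partial>grw_step (Kn_edges n) R xs) = 0"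
proof -
  have "trajectory_potential n ys = 0" if ys: "ys \<in> set_pmf (grw_step (Kn_edges n) R xs)" for ys
  proof -
    obtain w where "ys = xs @ [w]" "w < n"
      using grw_step_Kn_edges_successor[OF assms(1-4) ys] by blast
    with assms(3,5) show ?thesis
      unfolding trajectory_potential_def
      by (intro cover_potential_covered) (auto simp: traversed_snoc)
  qed
  then show ?thesis
    by (simp add: nn_integral_0_iff_AE AE_measure_pmf_iff)
qed

lemma nn_integral_grw_step_Kn_edges_saturated:
  assumes n: "2 \<le> n" and xs: "xs \<noteq> []" "last xs < n"
    and sat: "saturated n (traversed xs) (last xs)"
  shows "(\<integral>\<^sup>+ys. ennreal (trajectory_potential n ys) \<partial>grw_step (Kn_edges n) R xs)
    = ennreal ((\<Sum>w \<in> {..<n} - {last xs}. cover_potential n (traversed xs) w) / real (n - 1))"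
proof -
  let ?N = "{..<n} - {last xs}"
  have M: "grw_step (Kn_edges n) R xs = map_pmf (\<lambda>w. xs @ [w]) (pmf_of_set ?N)"
    using sat xs(2) unfolding grw_step_def
    by (simp add: unused_edges_Kn_edges_eq_empty_iff nbrs_Kn_edges)
  have N: "finite ?N" "?N \<noteq> {}" "card ?N = n - 1"
    using n xs(2) lessThan_diff_singleton_nonempty by auto
  have "trajectory_potential n (xs @ [w]) = cover_potential n (traversed xs) w" if "w \<in> ?N" for w
    using sat that unfolding trajectory_potential_def saturated_def
    by (simp add: traversed_snoc[OF xs(1)] insert_absorb)
  then show ?thesis
    unfolding M using N n
    by (simp add: nn_integral_pmf_of_set sum_ennreal cover_potential_nonneg sum_nonneg
        divide_ennreal ennreal_of_nat_eq_real_of_nat)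
qed

lemma grw_Kn_edges_drift:
  assumes n: "2 \<le> n" and R: "valid_rule (Kn_edges n) R" and xs: "xs \<noteq> []" "last xs < n"
  shows "indicator {xs. \<not> Kn_edges n \<subseteq> traversed xs} xs
      + (\<integral>\<^sup>+ys. ennreal (trajectory_potential n ys) \<partial>grw_step (Kn_edges n) R xs)
    \<le> ennreal (trajectory_potential n xs)"
proof -
  let ?v = "last xs" and ?T = "traversed xs" and ?M = "grw_step (Kn_edges n) R xs"
  consider "Kn_edges n \<subseteq> ?T" | "\<not> Kn_edges n \<subseteq> ?T" "\<not> saturated n ?T ?v"
    | "\<not> Kn_edges n \<subseteq> ?T" "saturated n ?T ?v"
    by blast
  then show ?thesis
  proof cases
    case 1
    then show ?thesis
      by (simp add: nn_integral_grw_step_Kn_edges_covered[OF n R xs])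
  next
    case 2
    have "1 + ennreal (trajectory_potential n ys) \<le> ennreal (trajectory_potential n xs)"
      if ys: "ys \<in> set_pmf ?M" for ys
    proof -
      obtain w where w: "ys = xs @ [w]" "w < n" "w \<noteq> ?v" "{?v, w} \<notin> ?T"
        using grw_step_Kn_edges_successor[OF n R xs ys] 2 by blast
      have "1 + trajectory_potential n ys \<le> trajectory_potential n xs"
        unfolding trajectory_potential_def w(1) traversed_snoc[OF xs(1)] last_snoc
        using cover_potential_greedy_step[OF xs(2) w(2-4) 2(2)] .
      then have "ennreal (1 + trajectory_potential n ys) \<le> ennreal (trajectory_potential n xs)"
        by (rule ennreal_leI)
      then show ?thesis
        by (simp add: cover_potential_nonneg trajectory_potential_def)
    qed
    then have "(\<integral>\<^sup>+ys. 1 + ennreal (trajectory_potential n ys) \<partial>?M)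
        \<le> (\<integral>\<^sup>+ys. ennreal (trajectory_potential n xs) \<partial>?M)"
      by (intro nn_integral_mono_AE AE_pmfI)
    with 2 show ?thesis
      by (simp add: nn_integral_add)
  next
    case 3
    have "ennreal (1 + (\<Sum>w \<in> {..<n} - {?v}. cover_potential n ?T w) / real (n - 1))
        = ennreal (trajectory_potential n xs)"
      unfolding trajectory_potential_def cover_potential_uniform_step[OF xs(2) 3(2,1)] ..
    with 3 show ?thesis
      by (simp add: nn_integral_grw_step_Kn_edges_saturated[OF n xs 3(2)]
          cover_potential_nonneg sum_nonneg)
  qed
qed

lemma trajectory_potential_start:
  "trajectory_potential n [v0] \<le> real (card (Kn_edges n)) + (\<Sum>k = 1..n - 1. escape_time n k)"
proof -
  have "traversed [v0] = {}"
    unfolding traversed_def by simp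
  moreover have "1 \<le> card (insert v0 (saturated_vertices n {}))"
    by (simp add: finite_saturated_vertices Suc_le_eq card_gt_0_iff)
  ultimately show ?thesis
    unfolding trajectory_potential_def cover_potential_def
    using sum_escape_time_antimono by simp
qed

theorem expected_edge_cover_time_Kn_edges_le:
  assumes "v0 < n" "valid_rule (Kn_edges n) R"
  shows "expected_edge_cover_time (Kn_edges n) R v0
    \<le> ennreal (real (card (Kn_edges n)) + (\<Sum>k = 1..n - 1. escape_time n k))"
proof (cases "2 \<le> n")
  case False
  then have "Kn_edges n = {}"
    unfolding Kn_edges_def by auto
  then show ?thesis
    unfolding expected_edge_cover_time_def by simp
next
  case True
  have "expected_edge_cover_time (Kn_edges n) R v0 \<le> ennreal (trajectory_potential n [v0])"
    using grw_Kn_edges_drift[OF True assms(2)] set_pmf_grw_Kn_edges_last_less[OF True assms]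
    by (intro expected_edge_cover_time_le_potential) blast
  also have "\<dots> \<le> ennreal (real (card (Kn_edges n)) + (\<Sum>k = 1..n - 1. escape_time n k))"
    by (intro ennreal_leI trajectory_potential_start)
  finally show ?thesis .
qed

lemma sum_escape_time_eq_harm: "(\<Sum>k = 1..n - 1. escape_time n k) = real (n - 1) * harm (n - 1)"
proof -
  have "(\<Sum>k = 1..n - 1. escape_time n k)
      = (\<Sum>k = 1..n - 1. (\<lambda>j. real (n - 1) / real j) (n - 1 + 1 - k))"
    unfolding escape_time_def by (intro sum.cong) auto
  also have "\<dots> = (\<Sum>j = 1..n - 1. real (n - 1) / real j)"
    by (rule sum.atLeastAtMost_rev[symmetric])
  also have "\<dots> = real (n - 1) * harm (n - 1)"
    unfolding harm_def by (simp add: sum_distrib_left divide_inverse)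
  finally show ?thesis .
qed

lemma harm_le_ln_plus_one: "0 < m \<Longrightarrow> harm m \<le> ln (real m) + 1"
  using euler_mascheroni_sequence_decreasing[of 1 m] by (simp add: harm_def)

lemma sum_escape_time_le: "(\<Sum>k = 1..n - 1. escape_time n k) \<le> real n * ln (real n) + real n"
proof (cases "2 \<le> n")
  case True
  have "harm (n - 1) \<le> ln (real (n - 1)) + 1"
    using True by (intro harm_le_ln_plus_one) simp
  also have "\<dots> \<le> ln (real n) + 1"
    using True by simp
  finally have "real (n - 1) * harm (n - 1) \<le> real n * (ln (real n) + 1)"
    using True by (intro mult_mono) (auto simp: harm_nonneg)
  then show ?thesis
    unfolding sum_escape_time_eq_harm by (simp add: algebra_simps)
next
  case False
  then show ?thesis
    by (cases n) simp_all
qed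

theorem mainTheorem3:
  shows "\<exists>f :: nat \<Rightarrow> real. f \<longlonglongrightarrow> 0 \<and>
    (\<forall>n R v0. v0 < n \<and> valid_rule (Kn_edges n) R \<longrightarrow>
       expected_edge_cover_time (Kn_edges n) R v0
         \<le> ennreal (real (card (Kn_edges n)) + (1 + f n) * real n * ln (real n))) \<and>
    (\<forall>n R v0. v0 < n \<and> valid_rule (Kn_edges n) R \<longrightarrow>
       expected_edge_cover_time (Kn_edges n) R v0
         \<le> ennreal (real (card (Kn_edges n)) + (\<Sum>i=1..n-1. real (n - 1) / real (n - i))))"
proof (intro exI conjI allI impI)
  let ?f = "\<lambda>n. 1 / ln (real n)"
  show "?f \<longlonglongrightarrow> 0"
    using tendsto_inverse_0_at_top[OF filterlim_compose[OF ln_at_top filterlim_real_sequentially]]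
    by (simp add: inverse_eq_divide)
  fix n R v0
  assume "v0 < n \<and> valid_rule (Kn_edges n) R"
  then have bound: "expected_edge_cover_time (Kn_edges n) R v0
      \<le> ennreal (real (card (Kn_edges n)) + (\<Sum>k = 1..n - 1. escape_time n k))"
    by (intro expected_edge_cover_time_Kn_edges_le) auto
  then show "expected_edge_cover_time (Kn_edges n) R v0
      \<le> ennreal (real (card (Kn_edges n)) + (\<Sum>i=1..n-1. real (n - 1) / real (n - i)))"
    by (simp add: escape_time_def)
  have "(\<Sum>k = 1..n - 1. escape_time n k) \<le> (1 + ?f n) * real n * ln (real n)"
  proof (cases "2 \<le> n")
    case True
    then have "(1 + ?f n) * real n * ln (real n) = real n * ln (real n) + real n"
      by (simp add: field_simps)
    with sum_escape_time_le[of n] show ?thesis by simp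
  qed (auto simp: not_le less_2_cases_iff)
  with bound show "expected_edge_cover_time (Kn_edges n) R v0
      \<le> ennreal (real (card (Kn_edges n)) + (1 + ?f n) * real n * ln (real n))"
    by (elim order_trans) (intro ennreal_leI add_left_mono)
qed

end
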